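(* Let $\delta$ be a non-null classifier and $t\ge0$. For each $\beta\in\{0,1\}$, the maximizer of the conditional payoff $V_\beta(r)$ over $r\in\mathbb{R}$ is $r^*_\beta=k^*_\beta(t,F)/\rho(\delta,\phi)$, where $k_0^*=k_0^*(t,F)$ and $k_1^*=k_1^*(t,F)$ are defined implicitly by $k_0^*=t-\frac{F(k_0^* )}{f(k_0^* )}$ and $k_1^*=t+\frac{1-F(k_1^* )}{f(k_1^* )}$. In particular these two values do not depend on the individual's cost $\gamma_i$.
   Context: Individuals have privately known costs $\gamma_i\in\mathbb{R}$ of choosing $\beta_i=1$ (compliance) rather than $\beta_i=0$, distributed according to a continuously differentiable CDF $F$ with log-concave density $f$ of full support on $\mathbb{R}$. A classifier $\delta=(\delta_1,\delta_0)\in[0,1]^2$ assigns $d_i\in\{0,1\}$ with $\Pr[d_i=s_i\mid s_i]=\delta_{s_i}$, where $\Pr[s_i=\beta_i]=\phi\in(\tfrac12,1]$. Let $\rho=\rho(\delta,\phi)=(\delta_1+\delta_0-1)(2\phi-1)$; $\delta$ is non-null if $\rho\ne0$. Individuals with $d_i=1$ receive reward $r$, financed by an equal tax on everyone (budget balance), and each gets $t\cdot\pi$ where $\pi=F(r\rho)$ is the compliance rate (individuals comply iff $\gamma_i\le r\rho$). Conditional payoffs: $V_1(r)=-\gamma_i+r\rho(1-F(r\rho))+tF(r\rho)$ (complying) and $V_0(r)=-r\rho F(r\rho)+tF(r\rho)$ (not complying). *)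

theory Defs
  imports "HOL-Analysis.Analysis"
begin

text \<open>Informativeness of a classifier delta = (d1, d0) given signal accuracy phi.\<close>
definition rho :: "real \<Rightarrow> real \<Rightarrow> real \<Rightarrow> real" where
  "rho d1 d0 phi = (d1 + d0 - 1) * (2 * phi - 1)"

text \<open>Conditional payoff when complying (cost gamma), as function of reward r.\<close>
definition V1 :: "(real \<Rightarrow> real) \<Rightarrow> real \<Rightarrow> real \<Rightarrow> real \<Rightarrow> real \<Rightarrow> real" where
  "V1 F rh t gamma r = - gamma + r * rh * (1 - F (r * rh)) + t * F (r * rh)"

text \<open>Conditional payoff when not complying, as function of reward r.\<close>
definition V0 :: "(real \<Rightarrow> real) \<Rightarrow> real \<Rightarrow> real \<Rightarrow> real \<Rightarrow> real" where
  "V0 F rh t r = - r * rh * F (r * rh) + t * F (r * rh)"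

definition log_concave :: "(real \<Rightarrow> real) \<Rightarrow> bool" where
  "log_concave f \<longleftrightarrow> (\<forall>x. f x > 0) \<and> concave_on UNIV (\<lambda>x. ln (f x))"

end

(*
  Substituting k = r * rho, the non-complier's payoff is (t - k) F k, whose derivative is
  f k * (t - k - F k / f k). Log-concavity of f makes F / f nondecreasing, so the bracket is
  strictly decreasing; it therefore has exactly one zero k0, the unique strict maximiser.
  Reflecting the cost distribution (F x to 1 - F (- x), f x to f (- x), which preserves
  log-concavity) turns the complier's payoff into the non-complier's one with t replaced by -t,
  plus the constant t - gamma; this yields k1, and shows that gamma does not affect the maximiser.
*)
theory Submission
  imports Defs
begin

lemma log_concave_pos: "log_concave f \<Longrightarrow> 0 < f x"
  by (simp add: log_concave_def)

lemma log_concave_reflect: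
  assumes "log_concave f"
  shows "log_concave (\<lambda>x. f (- x))"
proof -
  have concave: "concave_on UNIV (\<lambda>x. ln (f x))"
    using assms by (simp add: log_concave_def)
  have "concave_on UNIV (\<lambda>x. ln (f (- x)))"
    unfolding concave_on_iff
  proof (intro conjI ballI allI impI)
    fix a b u v :: real
    assume "0 \<le> u" "0 \<le> v" "u + v = 1"
    then have "u * ln (f (- a)) + v * ln (f (- b)) \<le> ln (f (u *\<^sub>R (- a) + v *\<^sub>R (- b)))"
      using concave unfolding concave_on_iff by blast
    then show "u * ln (f (- a)) + v * ln (f (- b)) \<le> ln (f (- (u *\<^sub>R a + v *\<^sub>R b)))"
      by simp
  qed simp
  then show ?thesis
    using assms by (simp add: log_concave_def)
qed

lemma log_concave_shift_mult_le:
  fixes f :: "real \<Rightarrow> real"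
  assumes lc: "log_concave f" and "x \<le> y" and "0 \<le> s"
  shows "f (x - s) * f y \<le> f (y - s) * f x"
proof (cases "s = 0 \<or> x = y")
  case True
  then show ?thesis by (auto simp: mult.commute)
next
  case False
  with assms have "0 < s" "x < y" by auto
  have concave: "concave_on UNIV (\<lambda>x. ln (f x))"
    using lc by (simp add: log_concave_def)
  define l where "l = s / (y - x + s)"
  have l: "0 \<le> l" "l \<le> 1" "l * (y - x + s) = s"
    using \<open>0 < s\<close> \<open>x < y\<close> by (auto simp: l_def field_simps)
  have ln_ge: "u * ln (f a) + v * ln (f b) \<le> ln (f (u * a + v * b))"
    if "0 \<le> u" "0 \<le> v" "u + v = 1" for a b u v
    using concave that unfolding concave_on_iff by auto
  have "x = (1 - l) * (x - s) + l * y" "y - s = l * (x - s) + (1 - l) * y"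
    using l(3) by (simp_all add: algebra_simps)
  then have "(1 - l) * ln (f (x - s)) + l * ln (f y) \<le> ln (f x)"
    "l * ln (f (x - s)) + (1 - l) * ln (f y) \<le> ln (f (y - s))"
    using ln_ge[of "1 - l" l "x - s" y] ln_ge[of l "1 - l" "x - s" y] l by simp_all
  then have "ln (f (x - s)) + ln (f y) \<le> ln (f (y - s)) + ln (f x)"
    by (simp add: algebra_simps)
  then have "ln (f (x - s) * f y) \<le> ln (f (y - s) * f x)"
    by (simp add: ln_mult_pos log_concave_pos[OF lc])
  then show ?thesis
    by (simp add: log_concave_pos[OF lc])
qed

lemma nonneg_if_deriv_nonneg_tendsto_zero_at_bot:
  fixes K K' :: "real \<Rightarrow> real"
  assumes "\<And>u. u \<le> y \<Longrightarrow> (K has_real_derivative K' u) (at u)"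
    and "\<And>u. u \<le> y \<Longrightarrow> 0 \<le> K' u"
    and "(K \<longlongrightarrow> 0) at_bot"
  shows "0 \<le> K y"
proof -
  have "K u \<le> K y" if "u \<le> y" for u
    using deriv_nonneg_imp_mono[of u y K K'] assms(1,2) that by auto
  then show ?thesis
    by (intro tendsto_upperbound[OF assms(3)]) (auto simp: eventually_at_bot_linorder)
qed

lemma cdf_div_density_mono:
  fixes F f :: "real \<Rightarrow> real"
  assumes F_deriv: "\<And>x. (F has_real_derivative f x) (at x)"
    and F_bot: "(F \<longlongrightarrow> 0) at_bot"
    and lc: "log_concave f" and "x \<le> y"
  shows "F x / f x \<le> F y / f y"
proof -
  define c where "c = f y / f x"
  define d where "d = y - x"
  text \<open>The claim is \<open>0 \<le> K y\<close>; the shift inequality makes \<open>K\<close> nondecreasing up to \<open>y\<close>.\<close>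
  define K where "K u = F u - c * F (u - d)" for u
  have "((\<lambda>u. F (u - d)) has_real_derivative f (u - d) * 1) (at u)" for u
    by (rule DERIV_chain2[OF F_deriv]) (auto intro!: derivative_eq_intros)
  then have K_deriv: "(K has_real_derivative f u - c * f (u - d)) (at u)" for u
    unfolding K_def by (auto intro!: derivative_eq_intros F_deriv)
  have "0 \<le> f u - c * f (u - d)" if "u \<le> y" for u
  proof -
    have "f (u - d) * f y \<le> f u * f x"
      using log_concave_shift_mult_le[OF lc \<open>x \<le> y\<close>, of "y - u"] that by (simp add: d_def algebra_simps)
    then show ?thesis
      using log_concave_pos[OF lc, of x] by (simp add: c_def field_simps)
  qed
  moreover have "filterlim (\<lambda>u. u - d) at_bot at_bot"
    unfolding filterlim_at_bot eventually_at_bot_linorder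
    by (meson diff_le_eq)
  then have "((\<lambda>u. F (u - d)) \<longlongrightarrow> 0) at_bot"
    by (rule filterlim_compose[OF F_bot])
  then have "(K \<longlongrightarrow> 0) at_bot"
    unfolding K_def using tendsto_diff[OF F_bot tendsto_mult_right_zero] by simp
  ultimately have "0 \<le> K y"
    using nonneg_if_deriv_nonneg_tendsto_zero_at_bot[OF K_deriv] by blast
  then show ?thesis
    using log_concave_pos[OF lc, of x] log_concave_pos[OF lc, of y]
    by (simp add: K_def c_def d_def field_simps)
qed

lemma cdf_gap_strict_antimono:
  fixes F f :: "real \<Rightarrow> real"
  assumes F_deriv: "\<And>x. (F has_real_derivative f x) (at x)"
    and F_bot: "(F \<longlongrightarrow> 0) at_bot"
    and lc: "log_concave f" and "a < b"
  shows "t - b - F b / f b < t - a - F a / f a"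
  using cdf_div_density_mono[OF F_deriv F_bot lc, of a b] \<open>a < b\<close> by simp

lemma ex1_zero_if_continuous_strict_antimono:
  fixes h :: "real \<Rightarrow> real"
  assumes cont: "continuous_on UNIV h"
    and dec: "\<And>a b. a < b \<Longrightarrow> h b < h a"
    and "0 \<le> h a" and "h b \<le> 0"
  shows "\<exists>!k. h k = 0"
proof -
  have "a \<le> b"
    using dec[of b a] assms(3,4) by force
  then obtain k where "h k = 0"
    using IVT2'[of h b 0 a] assms(3,4) continuous_on_subset[OF cont] by blast
  moreover have "k' = k" if "h k' = 0" for k'
    using dec[of k k'] dec[of k' k] that \<open>h k = 0\<close> by (cases k k' rule: linorder_cases) auto
  ultimately show ?thesis by blast
qed

lemma strict_max_if_deriv_sign:
  fixes g g' :: "real \<Rightarrow> real"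
  assumes deriv: "\<And>k. (g has_real_derivative g' k) (at k)"
    and pos: "\<And>k. k < k0 \<Longrightarrow> 0 < g' k"
    and neg: "\<And>k. k0 < k \<Longrightarrow> g' k < 0"
    and "k \<noteq> k0"
  shows "g k < g k0"
proof -
  have cont: "continuous_on S g" for S
    using deriv by (meson DERIV_isCont continuous_at_imp_continuous_on)
  consider "k < k0" | "k0 < k"
    using \<open>k \<noteq> k0\<close> by linarith
  then show ?thesis
  proof cases
    case 1
    then show ?thesis
      using DERIV_pos_imp_increasing_open[OF 1 _ cont] deriv pos by fastforce
  next
    case 2
    then show ?thesis
      using DERIV_neg_imp_decreasing_open[OF 2 _ cont] deriv neg by fastforce
  qed
qed

lemma cdf_fixed_point_ex1:
  fixes F f :: "real \<Rightarrow> real"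
  assumes F_deriv: "\<And>x. (F has_real_derivative f x) (at x)"
    and f_cont: "continuous_on UNIV f"
    and F_bot: "(F \<longlongrightarrow> 0) at_bot"
    and lc: "log_concave f"
  shows "\<exists>!k. k = t - F k / f k"
proof -
  note f_pos = log_concave_pos[OF lc]
  define h where "h k = t - k - F k / f k" for k
  have "continuous_on UNIV F"
    using F_deriv by (meson DERIV_isCont continuous_at_imp_continuous_on)
  then have "continuous_on UNIV h"
    unfolding h_def using f_cont f_pos by (intro continuous_intros) (auto simp: less_imp_neq[symmetric])
  moreover have "h b < h a" if "a < b" for a b
    unfolding h_def using cdf_gap_strict_antimono[OF F_deriv F_bot lc that] .
  moreover have "0 \<le> h (min 0 (t - F 0 / f 0))"
    using cdf_div_density_mono[OF F_deriv F_bot lc, of "min 0 (t - F 0 / f 0)" 0]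
    by (simp add: h_def)
  moreover have "0 < F t"
    using DERIV_pos_imp_increasing_at_bot[OF _ F_bot] F_deriv f_pos by blast
  then have "h t \<le> 0"
    using f_pos[of t] by (simp add: h_def)
  ultimately have "\<exists>!k. h k = 0"
    by (rule ex1_zero_if_continuous_strict_antimono)
  then show ?thesis
    by (simp add: h_def eq_diff_eq' algebra_simps)
qed

lemma V0_strict_max:
  fixes F f :: "real \<Rightarrow> real"
  assumes F_deriv: "\<And>x. (F has_real_derivative f x) (at x)"
    and F_bot: "(F \<longlongrightarrow> 0) at_bot"
    and lc: "log_concave f"
    and rh: "rh \<noteq> 0"
    and k0: "k0 = t - F k0 / f k0"
    and r: "r \<noteq> k0 / rh"
  shows "V0 F rh t r < V0 F rh t (k0 / rh)"
proof -
  note f_pos = log_concave_pos[OF lc]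
  define h where "h k = t - k - F k / f k" for k
  have h_dec: "h b < h a" if "a < b" for a b
    unfolding h_def using cdf_gap_strict_antimono[OF F_deriv F_bot lc that] .
  have "h k0 = 0"
    unfolding h_def using k0 by linarith
  have deriv: "((\<lambda>k. (t - k) * F k) has_real_derivative f k * h k) (at k)" for k
  proof -
    have "((\<lambda>k. (t - k) * F k) has_real_derivative - F k + (t - k) * f k) (at k)"
      by (auto intro!: derivative_eq_intros F_deriv)
    moreover have "- F k + (t - k) * f k = f k * h k"
      using f_pos[of k] by (simp add: h_def field_simps)
    ultimately show ?thesis
      by simp
  qed
  have "(t - r * rh) * F (r * rh) < (t - k0) * F k0"
  proof (rule strict_max_if_deriv_sign[OF deriv])
    show "0 < f k * h k" if "k < k0" for k
      using h_dec[OF that] \<open>h k0 = 0\<close> f_pos[of k] by simp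
    show "f k * h k < 0" if "k0 < k" for k
      using h_dec[OF that] \<open>h k0 = 0\<close> f_pos[of k] by (simp add: mult_pos_neg)
    show "r * rh \<noteq> k0"
      using rh r by (auto simp: field_simps)
  qed
  then show ?thesis
    using rh by (simp add: V0_def algebra_simps)
qed

lemma cdf_reflect:
  fixes F f :: "real \<Rightarrow> real"
  assumes F_deriv: "\<And>x. (F has_real_derivative f x) (at x)"
    and F_top: "(F \<longlongrightarrow> 1) at_top"
  shows "((\<lambda>x. 1 - F (- x)) has_real_derivative f (- x)) (at x)"
    and "((\<lambda>x. 1 - F (- x)) \<longlongrightarrow> 0) at_bot"
proof -
  have "((\<lambda>x. F (- x)) has_real_derivative - f (- x)) (at x)"
    using DERIV_mirror F_deriv by blast
  from DERIV_diff[OF DERIV_const[of 1] this]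
  show "((\<lambda>x. 1 - F (- x)) has_real_derivative f (- x)) (at x)"
    by simp
  have "((\<lambda>x. F (- x)) \<longlongrightarrow> 1) at_bot"
    using F_top filterlim_at_top_mirror by blast
  then show "((\<lambda>x. 1 - F (- x)) \<longlongrightarrow> 0) at_bot"
    using tendsto_diff[OF tendsto_const, of "\<lambda>x. F (- x)" 1 at_bot 1] by simp
qed

lemma V1_eq_V0_reflect: "V1 F rh t gamma r = t - gamma + V0 (\<lambda>x. 1 - F (- x)) (- rh) (- t) r"
  by (simp add: V1_def V0_def algebra_simps)

lemma survival_fixed_point_ex1:
  fixes F f :: "real \<Rightarrow> real"
  assumes F_deriv: "\<And>x. (F has_real_derivative f x) (at x)"
    and f_cont: "continuous_on UNIV f"
    and F_top: "(F \<longlongrightarrow> 1) at_top"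
    and lc: "log_concave f"
  shows "\<exists>!k. k = t + (1 - F k) / f k"
proof -
  have "continuous_on UNIV (\<lambda>x. f (- x))"
    by (intro continuous_on_compose2[OF f_cont]) (auto intro: continuous_intros)
  then have "\<exists>!k. k = - t - (1 - F (- k)) / f (- k)"
    by (rule cdf_fixed_point_ex1[OF cdf_reflect(1)[OF F_deriv F_top] _ cdf_reflect(2)[OF F_deriv F_top]
          log_concave_reflect[OF lc]])
  then obtain k where k: "k = - t - (1 - F (- k)) / f (- k)"
    and unique: "\<And>k'. k' = - t - (1 - F (- k')) / f (- k') \<Longrightarrow> k' = k"
    by blast
  show ?thesis
  proof (rule ex1I[of _ "- k"])
    show "- k = t + (1 - F (- k)) / f (- k)"
      using k by linarith
    show "k' = - k" if "k' = t + (1 - F k') / f k'" for k'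
    proof -
      have "- k' = - t - (1 - F (- (- k'))) / f (- (- k'))"
        unfolding minus_minus using that by linarith
      then have "- k' = k"
        by (rule unique)
      then show ?thesis
        by linarith
    qed
  qed
qed

lemma V1_strict_max:
  fixes F f :: "real \<Rightarrow> real"
  assumes F_deriv: "\<And>x. (F has_real_derivative f x) (at x)"
    and F_top: "(F \<longlongrightarrow> 1) at_top"
    and lc: "log_concave f"
    and rh: "rh \<noteq> 0"
    and k1: "k1 = t + (1 - F k1) / f k1"
    and r: "r \<noteq> k1 / rh"
  shows "V1 F rh t gamma r < V1 F rh t gamma (k1 / rh)"
proof -
  have "V0 (\<lambda>x. 1 - F (- x)) (- rh) (- t) r < V0 (\<lambda>x. 1 - F (- x)) (- rh) (- t) (- k1 / - rh)"
  proof (rule V0_strict_max[OF cdf_reflect[OF F_deriv F_top] log_concave_reflect[OF lc]])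
    show "- k1 = - t - (1 - F (- (- k1))) / f (- (- k1))"
      unfolding minus_minus using k1 by linarith
  qed (use rh r in auto)
  then show ?thesis
    by (simp add: V1_eq_V0_reflect)
qed

theorem corollary1:
  fixes F f :: "real \<Rightarrow> real" and d1 d0 phi t :: real
  assumes F_deriv: "\<And>x. (F has_real_derivative f x) (at x)"
    and f_cont: "continuous_on UNIV f"
    and F_mono: "mono F"
    and F_bot: "(F \<longlongrightarrow> 0) at_bot"
    and F_top: "(F \<longlongrightarrow> 1) at_top"
    and f_pos: "\<And>x. f x > 0"
    and f_logconc: "log_concave f"
    and d1: "d1 \<in> {0..1}" and d0: "d0 \<in> {0..1}"
    and phi: "phi \<in> {1/2<..1}"
    and nonnull: "rho d1 d0 phi \<noteq> 0"
    and t: "t \<ge> 0"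
  shows "\<exists>k0 k1.
           (k0 = t - F k0 / f k0) \<and> (\<forall>k. k = t - F k / f k \<longrightarrow> k = k0) \<and>
           (k1 = t + (1 - F k1) / f k1) \<and> (\<forall>k. k = t + (1 - F k) / f k \<longrightarrow> k = k1) \<and>
           (\<forall>r. r \<noteq> k0 / rho d1 d0 phi \<longrightarrow>
                 V0 F (rho d1 d0 phi) t r < V0 F (rho d1 d0 phi) t (k0 / rho d1 d0 phi)) \<and>
           (\<forall>gamma r. r \<noteq> k1 / rho d1 d0 phi \<longrightarrow>
                 V1 F (rho d1 d0 phi) t gamma r < V1 F (rho d1 d0 phi) t gamma (k1 / rho d1 d0 phi))"
proof -
  obtain k0 where k0: "k0 = t - F k0 / f k0" and k0_unique: "\<And>k. k = t - F k / f k \<Longrightarrow> k = k0"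
    using cdf_fixed_point_ex1[OF F_deriv f_cont F_bot f_logconc, of t] by blast
  obtain k1 where k1: "k1 = t + (1 - F k1) / f k1"
    and k1_unique: "\<And>k. k = t + (1 - F k) / f k \<Longrightarrow> k = k1"
    using survival_fixed_point_ex1[OF F_deriv f_cont F_top f_logconc, of t] by blast
  show ?thesis
  proof (rule exI[of _ k0], rule exI[of _ k1], intro conjI allI impI k0 k1)
    show "k = k0" if "k = t - F k / f k" for k
      using that by (rule k0_unique)
    show "k = k1" if "k = t + (1 - F k) / f k" for k
      using that by (rule k1_unique)
    show "V0 F (rho d1 d0 phi) t r < V0 F (rho d1 d0 phi) t (k0 / rho d1 d0 phi)"
      if "r \<noteq> k0 / rho d1 d0 phi" for r
      using that by (rule V0_strict_max[OF F_deriv F_bot f_logconc nonnull k0])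
    show "V1 F (rho d1 d0 phi) t gamma r < V1 F (rho d1 d0 phi) t gamma (k1 / rho d1 d0 phi)"
      if "r \<noteq> k1 / rho d1 d0 phi" for gamma r
      using that by (rule V1_strict_max[OF F_deriv F_top f_logconc nonnull k1])
  qed
qed

end
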